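(* Fix an increasing sequence of positive integers $(q_\ell)_{\ell\in\mathcal L}$, $\mathcal L$ a (finite or infinite) set of consecutive integers starting at $0$, and for $d\in(\frac12(1-1/q_0),\frac12)$ let $\nu_c(d)$ be the critical exponent defined below. Then: (i) if $q_0=1$, $\nu_c(d)$ is non-increasing in $d$; (ii) if $q_0\ge2$, $\nu_c(d)$ is non-decreasing in $d$.
   Context: For $q\ge1$, $\delta(q)=qd-(q-1)/2$ and $\delta_+(q)=\max(\delta(q),0)$. For $r\ge0$ let $I_r=\{\ell\in\mathcal L:\ell+1\in\mathcal L,\ q_{\ell+1}=q_\ell+r+1\}$ and $\ell_r=\min I_r$ when $I_r\ne\emptyset$; $\mathcal R_d=\{r\ge0:I_r\ne\emptyset,\ \delta(r+1)>0\}$; $J_d=\{\ell\in\mathcal L:\ell+1\in\mathcal L,\ \delta(q_{\ell+1}-q_\ell)>0\}$. Critical exponent: $\nu_c=\infty$ if $\mathcal L=\{0\}$; $\infty$ if $q_0=1,d\le1/4,I_0=\emptyset$; $\frac{d+1/2-2\delta_+(q_{\ell_0})}{d}$ if $q_0=1,d\le1/4,I_0\ne\emptyset$; $\frac{1-2\delta_+(q_1-1)}{2d-1/2}$ if $q_0=1,d>1/4,1\in\mathcal L,J_d=\emptyset$; $\min\big(\frac{1-2\delta_+(q_1-1)}{2d-1/2},\frac{2d+1/2-2\delta_+(q_{\ell_r})-\delta(r+1)}{\delta(r+1)}:r\in\mathcal R_d\big)$ if $q_0=1,d>1/4,J_d\ne\emptyset$; $\infty$ if $q_0\ge2,I_0=\emptyset$;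 $1+\frac{4(\delta(q_0)-\delta_+(q_{\ell_0}))}{1-2d}$ if $q_0\ge2,I_0\ne\emptyset$. Monotonicity is in the extended reals $(0,\infty]$. *)

theory Defs
  imports Complex_Main "HOL-Library.Extended_Real"
begin

definition admissible_seq :: "nat set \<Rightarrow> (nat \<Rightarrow> nat) \<Rightarrow> bool" where
  "admissible_seq L q \<longleftrightarrow> 0 \<in> L \<and> (\<forall>l. Suc l \<in> L \<longrightarrow> l \<in> L)
     \<and> (\<forall>l\<in>L. q l > 0) \<and> (\<forall>l\<in>L. \<forall>m\<in>L. l < m \<longrightarrow> q l < q m)"

definition delta :: "real \<Rightarrow> real \<Rightarrow> real" where
  "delta d x = x * d - (x - 1) / 2"

definition delta_plus :: "real \<Rightarrow> real \<Rightarrow> real" where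
  "delta_plus d x = max (delta d x) 0"

definition Iset :: "nat set \<Rightarrow> (nat \<Rightarrow> nat) \<Rightarrow> nat \<Rightarrow> nat set" where
  "Iset L q r = {l \<in> L. Suc l \<in> L \<and> q (Suc l) = q l + r + 1}"

definition ell :: "nat set \<Rightarrow> (nat \<Rightarrow> nat) \<Rightarrow> nat \<Rightarrow> nat" where
  "ell L q r = (LEAST l. l \<in> Iset L q r)"

definition Rset :: "nat set \<Rightarrow> (nat \<Rightarrow> nat) \<Rightarrow> real \<Rightarrow> nat set" where
  "Rset L q d = {r. Iset L q r \<noteq> {} \<and> delta d (real (r + 1)) > 0}"

definition Jset :: "nat set \<Rightarrow> (nat \<Rightarrow> nat) \<Rightarrow> real \<Rightarrow> nat set" where
  "Jset L q d = {l \<in> L. Suc l \<in> L \<and> delta d (real (q (Suc l)) - real (q l)) > 0}"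

text \<open>The minimum in the case q0 = 1, d > 1/4, J_d nonempty is over a finite set
  (R_d is finite since d < 1/2), written as an infimum.\<close>

definition nu_c :: "nat set \<Rightarrow> (nat \<Rightarrow> nat) \<Rightarrow> real \<Rightarrow> ereal" where
  "nu_c L q d =
    (if L = {0} then \<infinity>
     else if q 0 = 1 then
       (if d \<le> 1/4 then
          (if Iset L q 0 = {} then \<infinity>
           else ereal ((d + 1/2 - 2 * delta_plus d (real (q (ell L q 0)))) / d))
        else
          (if Jset L q d = {} then
             ereal ((1 - 2 * delta_plus d (real (q 1) - 1)) / (2*d - 1/2))
           else
             min (ereal ((1 - 2 * delta_plus d (real (q 1) - 1)) / (2*d - 1/2)))
                 (INF r\<in>Rset L q d.
                    ereal ((2*d + 1/2 - 2 * delta_plus d (real (q (ell L q r)))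
                             - delta d (real (r + 1))) / delta d (real (r + 1))))))
     else
       (if Iset L q 0 = {} then \<infinity>
        else ereal (1 + 4 * (delta d (real (q 0)) - delta_plus d (real (q (ell L q 0))))
                         / (1 - 2*d))))"

end

theory Submission imports Defs begin

(* Each branch of nu_c is built from expressions of the form (a(d) - c * delta_plus d Q) / b(d)
   with a, b affine in d and b > 0.  Since delta_plus d Q = max (delta d Q) 0 and the map
   p \<mapsto> (a - c p)/b is antitone, such an expression is the minimum of two ratios of affine
   functions of d (lemma diff_max_divide).  A ratio of affine functions is monotone on an interval
   where its denominator is positive, with direction given by the sign of a 2x2 determinant
   (linear_fraction_antitone / linear_fraction_mono).

   The theorem then follows by case analysis on the branches of nu_c: for q0 = 1 the set R_d
   only grows with d, the r = 0 term of the infimum agrees with the small-d formula (which glues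
   the regimes d \<le> 1/4 and d > 1/4), and all terms decrease; for q0 \<ge> 2 the single term
   increases. *)

lemma linear_fraction_antitone:
  fixes N D :: "real \<Rightarrow> real" and a b c e d1 d2 :: real
  assumes N: "\<And>d. N d = a * d + b" and D: "\<And>d. D d = c * d + e"
    and d: "d1 \<le> d2" and pos: "0 < D d1" "0 < D d2" and det: "a * e \<le> b * c"
  shows "N d2 / D d2 \<le> N d1 / D d1"
proof -
  have "N d2 * D d1 - N d1 * D d2 = (d2 - d1) * (a * e - b * c)"
    unfolding N D by (simp add: algebra_simps)
  also have "\<dots> \<le> 0" using d det by (simp add: mult_nonneg_nonpos)
  finally show ?thesis using pos by (simp add: divide_simps)
qed

lemma linear_fraction_mono:
  fixes N D :: "real \<Rightarrow> real" and a b c e d1 d2 :: real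
  assumes N: "\<And>d. N d = a * d + b" and D: "\<And>d. D d = c * d + e"
    and d: "d1 \<le> d2" and pos: "0 < D d1" "0 < D d2" and det: "b * c \<le> a * e"
  shows "N d1 / D d1 \<le> N d2 / D d2"
proof -
  have "(- N d2) / D d2 \<le> (- N d1) / D d1"
    by (rule linear_fraction_antitone[where a="- a" and b="- b"]) (use assms in auto)
  thus ?thesis by simp
qed

lemma diff_max_divide:
  fixes a b c x y :: real
  assumes "0 \<le> c" "0 < b"
  shows "(a - c * max x y) / b = min ((a - c * x) / b) ((a - c * y) / b)"
proof (cases "x \<le> y")
  case True
  hence "(a - c * y) / b \<le> (a - c * x) / b"
    using assms by (intro divide_right_mono) (auto intro: mult_left_mono)
  thus ?thesis using True by (simp add: max_def min_def)
next
  case False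
  hence "(a - c * x) / b \<le> (a - c * y) / b"
    using assms by (intro divide_right_mono) (auto intro: mult_left_mono)
  thus ?thesis using False by (simp add: max_def min_def)
qed

text \<open>\<open>delta d x\<close> is affine in \<open>d\<close> with slope \<open>x\<close>, hence non-decreasing for \<open>x \<ge> 0\<close>.\<close>
lemma delta_mono: "0 \<le> x \<Longrightarrow> d1 \<le> d2 \<Longrightarrow> delta d1 x \<le> delta d2 x"
  unfolding delta_def by (simp add: mult_left_mono)

text \<open>The four expressions occurring in \<open>nu_c\<close>: the term for \<open>q\<^sub>0 = 1, d \<le> 1/4\<close>, the
  \<open>q\<^sub>1\<close>-term and the \<open>r\<close>-terms for \<open>q\<^sub>0 = 1, d > 1/4\<close>, and the term for \<open>q\<^sub>0 \<ge> 2\<close>.\<close>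
definition crit_small :: "real \<Rightarrow> real \<Rightarrow> real" where
  "crit_small Q d = (d + 1/2 - 2 * delta_plus d Q) / d"

definition crit_A :: "real \<Rightarrow> real \<Rightarrow> real" where
  "crit_A m d = (1 - 2 * delta_plus d m) / (2*d - 1/2)"

definition crit_R :: "real \<Rightarrow> real \<Rightarrow> real \<Rightarrow> real" where
  "crit_R Q x d = (2*d + 1/2 - 2 * delta_plus d Q - delta d x) / delta d x"

definition crit_large :: "real \<Rightarrow> real \<Rightarrow> real \<Rightarrow> real" where
  "crit_large q0 Q d = 1 + 4 * (delta d q0 - delta_plus d Q) / (1 - 2*d)"

text \<open>For \<open>r = 0\<close> (so \<open>x = r + 1 = 1\<close>, \<open>delta d 1 = d\<close>) the \<open>r\<close>-term is the small-\<open>d\<close> term;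
  this is what makes \<open>nu_c\<close> monotone across \<open>d = 1/4\<close>.\<close>
lemma crit_R_one: "0 < d \<Longrightarrow> crit_R Q 1 d = crit_small Q d"
  unfolding crit_R_def crit_small_def delta_def by (simp add: field_simps)

text \<open>Each term is the minimum of its \<open>delta\<close>-branch and its zero branch (from
  \<open>diff_max_divide\<close>); both branches are ratios of affine functions with the right determinant sign.\<close>
lemma crit_small_antitone:
  fixes Q d1 d2 :: real
  assumes Q: "1/2 \<le> Q" and d: "0 < d1" "d1 \<le> d2"
  shows "crit_small Q d2 \<le> crit_small Q d1"
proof -
  have split: "crit_small Q d = min ((d + 1/2 - 2 * delta d Q) / d) ((d + 1/2) / d)"
    if "0 < d" for d
    using diff_max_divide[of 2 d "d + 1/2" "delta d Q" 0] that
    unfolding crit_small_def delta_plus_def by simp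
  have delta_branch: "(d2 + 1/2 - 2 * delta d2 Q) / d2 \<le> (d1 + 1/2 - 2 * delta d1 Q) / d1"
    by (rule linear_fraction_antitone[where N="\<lambda>d. d + 1/2 - 2 * delta d Q" and D="\<lambda>d. d"
          and a="1 - 2*Q" and b="Q - 1/2" and c=1 and e=0])
       (use Q d in \<open>auto simp: delta_def field_simps\<close>)
  have zero_branch: "(d2 + 1/2) / d2 \<le> (d1 + 1/2) / d1"
    by (rule linear_fraction_antitone[where N="\<lambda>d. d + 1/2" and D="\<lambda>d. d"
          and a=1 and b="1/2" and c=1 and e=0]) (use d in auto)
  have "0 < d2" using d by simp
  show ?thesis unfolding split[OF d(1)] split[OF \<open>0 < d2\<close>]
    using delta_branch zero_branch by (rule min.mono)
qed

lemma crit_A_antitone: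
  fixes m d1 d2 :: real
  assumes m: "0 \<le> m" and d: "1/4 < d1" "d1 \<le> d2"
  shows "crit_A m d2 \<le> crit_A m d1"
proof -
  have split: "crit_A m d = min ((1 - 2 * delta d m) / (2*d - 1/2)) (1 / (2*d - 1/2))"
    if "1/4 < d" for d
    using diff_max_divide[of 2 "2*d - 1/2" 1 "delta d m" 0] that
    unfolding crit_A_def delta_plus_def by simp
  have delta_branch: "(1 - 2 * delta d2 m) / (2*d2 - 1/2) \<le> (1 - 2 * delta d1 m) / (2*d1 - 1/2)"
    by (rule linear_fraction_antitone[where N="\<lambda>d. 1 - 2 * delta d m" and D="\<lambda>d. 2*d - 1/2"
          and a="- 2*m" and b=m and c=2 and e="- 1/2"])
       (use m d in \<open>auto simp: delta_def field_simps\<close>)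
  have zero_branch: "1 / (2*d2 - 1/2) \<le> 1 / (2*d1 - 1/2)"
    using d by (intro divide_left_mono) auto
  have "1/4 < d2" using d by simp
  show ?thesis unfolding split[OF d(1)] split[OF \<open>1/4 < d2\<close>]
    using delta_branch zero_branch by (rule min.mono)
qed

lemma crit_R_antitone:
  fixes Q x d1 d2 :: real
  assumes Q: "1/2 \<le> Q" and x: "1 \<le> x" and pos: "0 < delta d1 x" and d: "d1 \<le> d2"
  shows "crit_R Q x d2 \<le> crit_R Q x d1"
proof -
  have pos2: "0 < delta d2 x" using pos delta_mono[OF _ d, of x] x by simp
  have split: "crit_R Q x d = min ((2*d + 1/2 - delta d x - 2 * delta d Q) / delta d x)
                                  ((2*d + 1/2 - delta d x) / delta d x)"
    if "0 < delta d x" for d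
    using diff_max_divide[of 2 "delta d x" "2*d + 1/2 - delta d x" "delta d Q" 0] that
    unfolding crit_R_def delta_plus_def by (simp add: algebra_simps)
  have det: "(2 - x - 2*Q) * ((1 - x) / 2) \<le> (x/2 + Q - 1) * x"
  proof -
    have "(x/2 + Q - 1) * x - (2 - x - 2*Q) * ((1 - x) / 2) = x/2 + Q - 1"
      by (simp add: field_simps)
    thus ?thesis using Q x by linarith
  qed
  have "(2*d2 + 1/2 - delta d2 x - 2 * delta d2 Q) / delta d2 x
        \<le> (2*d1 + 1/2 - delta d1 x - 2 * delta d1 Q) / delta d1 x"
    by (rule linear_fraction_antitone[where N="\<lambda>d. 2*d + 1/2 - delta d x - 2 * delta d Q"
          and D="\<lambda>d. delta d x" and a="2 - x - 2*Q" and b="x/2 + Q - 1" and c=x and e="(1 - x)/2"])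
       (use det pos pos2 d in \<open>auto simp: delta_def field_simps\<close>)
  moreover have "(2*d2 + 1/2 - delta d2 x) / delta d2 x \<le> (2*d1 + 1/2 - delta d1 x) / delta d1 x"
  proof (rule linear_fraction_antitone[where N="\<lambda>d. 2*d + 1/2 - delta d x"
          and D="\<lambda>d. delta d x" and a="2 - x" and b="x/2" and c=x and e="(1 - x)/2"])
    have "x/2 * x - (2 - x) * ((1 - x) / 2) = 3/2 * x - 1" by (simp add: field_simps)
    thus "(2 - x) * ((1 - x) / 2) \<le> x/2 * x" using x by linarith
  qed (use pos pos2 d in \<open>auto simp: delta_def field_simps\<close>)
  ultimately show ?thesis unfolding split[OF pos] split[OF pos2] by (rule min.mono)
qed

text \<open>In the regime \<open>q\<^sub>0 \<ge> 2\<close> the term increases: the \<open>delta_plus\<close>-branch is even constant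
  in \<open>d\<close>, equal to \<open>(Q - q\<^sub>0)/2\<close> inside the fraction.\<close>
lemma crit_large_mono:
  fixes q0 Q d1 d2 :: real
  assumes d: "d1 \<le> d2" "d2 < 1/2"
  shows "crit_large q0 Q d1 \<le> crit_large q0 Q d2"
proof -
  have split: "(delta d q0 - delta_plus d Q) / (1 - 2*d)
      = min ((delta d q0 - delta d Q) / (1 - 2*d)) (delta d q0 / (1 - 2*d))" if "d < 1/2" for d
    using diff_max_divide[of 1 "1 - 2*d" "delta d q0" "delta d Q" 0] that
    unfolding delta_plus_def by simp
  have delta_branch: "(delta d1 q0 - delta d1 Q) / (1 - 2*d1) \<le> (delta d2 q0 - delta d2 Q) / (1 - 2*d2)"
    by (rule linear_fraction_mono[where N="\<lambda>d. delta d q0 - delta d Q" and D="\<lambda>d. 1 - 2*d"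
          and a="q0 - Q" and b="(Q - q0)/2" and c="- 2" and e=1])
       (use d in \<open>auto simp: delta_def field_simps\<close>)
  have zero_branch: "delta d1 q0 / (1 - 2*d1) \<le> delta d2 q0 / (1 - 2*d2)"
    by (rule linear_fraction_mono[where N="\<lambda>d. delta d q0" and D="\<lambda>d. 1 - 2*d"
          and a=q0 and b="(1 - q0)/2" and c="- 2" and e=1])
       (use d in \<open>auto simp: delta_def field_simps\<close>)
  have "d1 < 1/2" using d by simp
  have "(delta d1 q0 - delta_plus d1 Q) / (1 - 2*d1)
         \<le> (delta d2 q0 - delta_plus d2 Q) / (1 - 2*d2)"
    unfolding split[OF \<open>d1 < 1/2\<close>] split[OF d(2)] using delta_branch zero_branch
    by (rule min.mono)
  hence "4 * ((delta d1 q0 - delta_plus d1 Q) / (1 - 2*d1))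
         \<le> 4 * ((delta d2 q0 - delta_plus d2 Q) / (1 - 2*d2))" by (rule mult_left_mono) simp_all
  thus ?thesis unfolding crit_large_def by (simp only: times_divide_eq_right add_le_cancel_left)
qed

lemma admissible_one:
  assumes adm: "admissible_seq L q" and L: "L \<noteq> {0}"
  shows "1 \<in> L"
proof -
  have down: "k \<in> L" if "m \<in> L" "k \<le> m" for k m
    using that
  proof (induction m)
    case (Suc m)
    thus ?case using adm unfolding admissible_seq_def by (cases "k = Suc m") auto
  qed simp
  obtain m where "m \<in> L" "m \<noteq> 0" using adm L unfolding admissible_seq_def by blast
  thus ?thesis using down[of m 1] by simp
qed

text \<open>\<open>q\<^sub>0\<close> is the least value of the sequence; this bounds the arguments \<open>q\<^sub>\<ell>\<close> of \<open>delta_plus\<close>.\<close>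
lemma admissible_q0_le: "admissible_seq L q \<Longrightarrow> l \<in> L \<Longrightarrow> q 0 \<le> q l"
  unfolding admissible_seq_def by (cases "l = 0") (auto intro: less_imp_le)

lemma ell_in_L: "Iset L q r \<noteq> {} \<Longrightarrow> ell L q r \<in> L"
  unfolding ell_def Iset_def by (metis (mono_tags, lifting) LeastI_ex ex_in_conv mem_Collect_eq)

text \<open>The index set of the infimum only grows with \<open>d\<close>, since \<open>delta\<close> does.\<close>
lemma Rset_mono:
  assumes "d1 \<le> d2" shows "Rset L q d1 \<subseteq> Rset L q d2"
  unfolding Rset_def using delta_mono[OF _ assms] by (fastforce intro: less_le_trans)

text \<open>Since \<open>delta d 1 = d\<close>, the index \<open>r = 0\<close> belongs to \<open>R\<^sub>d\<close> whenever \<open>I\<^sub>0 \<noteq> {}\<close>.\<close>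
lemma zero_in_Rset: "Iset L q 0 \<noteq> {} \<Longrightarrow> 0 < d \<Longrightarrow> 0 \<in> Rset L q d"
  unfolding Rset_def delta_def by simp

lemma Rset_imp_Jset: "r \<in> Rset L q d \<Longrightarrow> Jset L q d \<noteq> {}"
  unfolding Rset_def Jset_def Iset_def by force

lemma nu_c_small_d:
  assumes "L \<noteq> {0}" "q 0 = 1" "d \<le> 1/4"
  shows "nu_c L q d = (if Iset L q 0 = {} then \<infinity> else ereal (crit_small (q (ell L q 0)) d))"
  using assms unfolding nu_c_def crit_small_def by simp

text \<open>For \<open>d > 1/4\<close> the case \<open>J\<^sub>d = {}\<close> is subsumed: then \<open>R\<^sub>d = {}\<close> and the infimum is \<open>\<infinity>\<close>.\<close>
lemma nu_c_large_d:
  assumes "L \<noteq> {0}" "q 0 = 1" "1/4 < d"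
  shows "nu_c L q d = min (ereal (crit_A (real (q 1) - 1) d))
           (INF r\<in>Rset L q d. ereal (crit_R (q (ell L q r)) (real (r + 1)) d))"
proof (cases "Jset L q d = {}")
  case True
  hence "Rset L q d = {}" using Rset_imp_Jset by blast
  thus ?thesis using assms True unfolding nu_c_def crit_A_def by simp
qed (use assms in \<open>simp add: nu_c_def crit_A_def crit_R_def\<close>)

lemma nu_c_q0_ge2:
  assumes "L \<noteq> {0}" "2 \<le> q 0"
  shows "nu_c L q d = (if Iset L q 0 = {} then \<infinity>
                       else ereal (crit_large (q 0) (q (ell L q 0)) d))"
  using assms unfolding nu_c_def crit_large_def by simp

lemma nu_c_antitone_large_d:
  assumes adm: "admissible_seq L q" and L: "L \<noteq> {0}" and q0: "q 0 = 1"
    and d: "1/4 < d1" "d1 \<le> d2"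
  shows "nu_c L q d2 \<le> nu_c L q d1"
proof -
  have "q 0 < q 1" using adm admissible_one[OF adm L] unfolding admissible_seq_def by blast
  hence A_mono: "crit_A (real (q 1) - 1) d2 \<le> crit_A (real (q 1) - 1) d1"
    using q0 d by (intro crit_A_antitone) auto
  have R_mono: "(INF r\<in>Rset L q d2. ereal (crit_R (q (ell L q r)) (real (r + 1)) d2))
              \<le> (INF r\<in>Rset L q d1. ereal (crit_R (q (ell L q r)) (real (r + 1)) d1))"
  proof (rule INF_mono)
    fix r assume r: "r \<in> Rset L q d1"
    hence "Iset L q r \<noteq> {}" "0 < delta d1 (real (r + 1))" unfolding Rset_def by auto
    moreover from this have "1 \<le> q (ell L q r)"
      using admissible_q0_le[OF adm ell_in_L] q0 by metis
    ultimately have "crit_R (q (ell L q r)) (real (r + 1)) d2 \<le> crit_R (q (ell L q r)) (real (r + 1)) d1"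
      using d by (intro crit_R_antitone) auto
    thus "\<exists>r'\<in>Rset L q d2. ereal (crit_R (q (ell L q r')) (real (r' + 1)) d2)
                          \<le> ereal (crit_R (q (ell L q r)) (real (r + 1)) d1)"
      using r Rset_mono[OF d(2)] by auto
  qed
  have "1/4 < d2" using d by simp
  show ?thesis unfolding nu_c_large_d[of L q, OF L q0 d(1)] nu_c_large_d[of L q, OF L q0 \<open>1/4 < d2\<close>]
    by (intro min.mono) (use A_mono R_mono in simp_all)
qed

text \<open>When \<open>d\<^sub>1 \<le> 1/4 < d\<^sub>2\<close>, the bound \<open>nu_c d\<^sub>2 \<le> crit_small d\<^sub>2\<close> comes from the
  \<open>r = 0\<close> term of the infimum (\<open>crit_R_one\<close>).\<close>
lemma nu_c_antitone_q0_eq1: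
  assumes adm: "admissible_seq L q" and q0: "q 0 = 1" and d: "0 < d1" "d1 \<le> d2"
  shows "nu_c L q d2 \<le> nu_c L q d1"
proof (cases "L = {0} \<or> Iset L q 0 = {} \<and> d1 \<le> 1/4")
  case True
  thus ?thesis using nu_c_small_d[of L q d1] unfolding nu_c_def by auto
next
  case False
  hence L: "L \<noteq> {0}" by blast
  consider "1/4 < d1" | "d1 \<le> 1/4" "Iset L q 0 \<noteq> {}" using False by linarith
  thus ?thesis
  proof cases
    case 1
    thus ?thesis using nu_c_antitone_large_d[of L q, OF adm L q0 _ d(2)] by simp
  next
    case 2
    define Q where "Q = real (q (ell L q 0))"
    have "1 \<le> Q" using admissible_q0_le[OF adm ell_in_L[OF 2(2)]] q0 unfolding Q_def by simp
    hence small: "crit_small Q d2 \<le> crit_small Q d1" using d by (intro crit_small_antitone) auto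
    have "nu_c L q d2 \<le> ereal (crit_small Q d2)"
    proof (cases "d2 \<le> 1/4")
      case False
      have "0 \<in> Rset L q d2" using zero_in_Rset[OF 2(2)] d by simp
      hence "(INF r\<in>Rset L q d2. ereal (crit_R (q (ell L q r)) (real (r + 1)) d2))
             \<le> ereal (crit_R Q 1 d2)" unfolding Q_def by (force intro: INF_lower2)
      thus ?thesis using nu_c_large_d[of L q, OF L q0] False crit_R_one[of d2 Q] d
        by (simp add: min.coboundedI2)
    qed (use nu_c_small_d[of L q, OF L q0] 2 Q_def in simp)
    also have "\<dots> \<le> nu_c L q d1" using small nu_c_small_d[of L q, OF L q0 2(1)] 2(2) Q_def by simp
    finally show ?thesis .
  qed
qed

lemma nu_c_mono_q0_ge2:
  assumes "2 \<le> q 0" and "d1 \<le> d2" "d2 < 1/2"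
  shows "nu_c L q d1 \<le> nu_c L q d2"
proof (cases "L = {0}")
  case False
  thus ?thesis using nu_c_q0_ge2[of L q, OF False assms(1)] crit_large_mono[OF assms(2,3)] by simp
qed (simp add: nu_c_def)

theorem lemma9p5:
  fixes L :: "nat set" and q :: "nat \<Rightarrow> nat"
  assumes "admissible_seq L q"
  shows "(q 0 = 1 \<longrightarrow>
            (\<forall>d1 d2. (1 - 1 / real (q 0)) / 2 < d1 \<and> d1 \<le> d2 \<and> d2 < 1/2
                 \<longrightarrow> nu_c L q d2 \<le> nu_c L q d1))
       \<and> (q 0 \<ge> 2 \<longrightarrow>
            (\<forall>d1 d2. (1 - 1 / real (q 0)) / 2 < d1 \<and> d1 \<le> d2 \<and> d2 < 1/2
                 \<longrightarrow> nu_c L q d1 \<le> nu_c L q d2))"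
  using nu_c_antitone_q0_eq1[OF assms] nu_c_mono_q0_ge2 by auto

end
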